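(* Every element of $\mathfrak m\wedge\mathfrak m$ of the form $$\tilde\upsilon=\sum_{\bar\alpha\in\bar\Omega}c_{\bar\alpha}\sum_{\beta\in\Omega,\ \bar\beta=\bar\alpha}X_\beta\wedge X_{-\beta},\qquad c_{\bar\alpha}\in\mathbb C,$$ is $\mathfrak k$-invariant, and conversely every element of $(\wedge^2\mathfrak m)^{\mathfrak k}$ can be written in this form with $c_{-\bar\alpha}=-c_{\bar\alpha}$ for all $\bar\alpha$.
   Context: $\mathfrak g$ is a simple complex Lie algebra, $\mathfrak h$ a Cartan subalgebra, $\Omega$ the root system with root spaces $\mathfrak g^\gamma$. $\{X_\gamma\}_{\gamma\in\Omega}$ together with a basis of $\mathfrak h$ is a basis of $\mathfrak g$ with $X_\gamma\in\mathfrak g^\gamma$, $(X_\gamma,X_{-\gamma})=1$ for the Killing form, and $[X_\alpha,X_\beta]=N_{\alpha\beta}X_{\alpha+\beta}$ where $N_{\alpha\beta}\ne0$ iff $\alpha+\beta\in\Omega$, $N_{\alpha\beta}=N_{\beta\gamma}=N_{\gamma\alpha}$ when $\alpha+\beta+\gamma=0$, $N_{\beta\alpha}=-N_{\alpha\beta}$, $N_{-\alpha,-\beta}=-N_{\alpha\beta}$. $P\subset\Omega$, $\Gamma(P)$ the lattice it generates, $\Omega_P=\Gamma(P)\cap\Omega$, $\mathfrak k=\mathfrak h\oplus\bigoplus_{\gamma\in\Omega_P}\mathfrak g^\gamma$, $\mathfrak m=\bigoplus_{\gamma\in\Omega\setminus\Omega_P}\mathfrak g^\gamma$. Quasi-roots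 $\bar\Omega$: nonzero images of roots in $\Gamma(\Omega)/\Gamma(P)$; $\bar\beta$ denotes the image of $\beta$. *)

theory Defs
  imports "HOL-Analysis.Analysis"
begin

text \<open>
The real form of the dual of the Cartan subalgebra is a Euclidean space 'a
(inner product = dual of the Killing form); the root system Om of the simple complex Lie
algebra g lives in it.  The Lie algebra g has the basis {X_gamma} together with a basis of h;
the constants N describe [X_a, X_b] = N a b X_(a+b).
\<close>

definition simple_root_system :: "'a::euclidean_space set \<Rightarrow> bool" where
  "simple_root_system Om \<longleftrightarrow>
     finite Om \<and> 0 \<notin> Om \<and> span Om = UNIV \<and>
     (\<forall>a\<in>Om. \<forall>b\<in>Om. b - (2 * (b \<bullet> a) / (a \<bullet> a)) *\<^sub>R a \<in> Om) \<and>
     (\<forall>a\<in>Om. \<forall>b\<in>Om. 2 * (b \<bullet> a) / (a \<bullet> a) \<in> \<int>) \<and>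
     (\<forall>a\<in>Om. \<forall>t::real. t *\<^sub>R a \<in> Om \<longrightarrow> t = 1 \<or> t = -1) \<and>
     \<not> (\<exists>A B. A \<noteq> {} \<and> B \<noteq> {} \<and> A \<union> B = Om \<and> A \<inter> B = {} \<and>
              (\<forall>a\<in>A. \<forall>b\<in>B. a \<bullet> b = 0))"

definition chevalley_constants :: "'a::euclidean_space set \<Rightarrow> ('a \<Rightarrow> 'a \<Rightarrow> complex) \<Rightarrow> bool" where
  "chevalley_constants Om N \<longleftrightarrow>
     (\<forall>a\<in>Om. \<forall>b\<in>Om. N a b \<noteq> 0 \<longleftrightarrow> a + b \<in> Om) \<and>
     (\<forall>a\<in>Om. \<forall>b\<in>Om. \<forall>c\<in>Om. a + b + c = 0 \<longrightarrow> N a b = N b c \<and> N b c = N c a) \<and>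
     (\<forall>a\<in>Om. \<forall>b\<in>Om. N b a = - N a b) \<and>
     (\<forall>a\<in>Om. \<forall>b\<in>Om. N (-a) (-b) = - N a b)"

definition int_lattice :: "'a::euclidean_space set \<Rightarrow> 'a set" where
  "int_lattice P = {x. \<exists>c::'a \<Rightarrow> int. x = (\<Sum>p\<in>P. of_int (c p) *\<^sub>R p)}"

definition roots_P :: "'a::euclidean_space set \<Rightarrow> 'a set \<Rightarrow> 'a set" where
  "roots_P Om P = int_lattice P \<inter> Om"

text \<open>Roots whose root spaces make up m.\<close>
definition roots_m :: "'a::euclidean_space set \<Rightarrow> 'a set \<Rightarrow> 'a set" where
  "roots_m Om P = Om - roots_P Om P"

text \<open>Quasi-roots: the nonzero images of roots in Gamma(Om)/Gamma(P), represented as cosets.\<close>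
definition qclass :: "'a::euclidean_space set \<Rightarrow> 'a \<Rightarrow> 'a set" where
  "qclass P b = (\<lambda>l. b + l) ` int_lattice P"

definition quasi_roots :: "'a::euclidean_space set \<Rightarrow> 'a set \<Rightarrow> 'a set set" where
  "quasi_roots Om P = qclass P ` roots_m Om P"

text \<open>Elements of m wedge m, in the basis X_b wedge X_d: antisymmetric coefficient functions w
  supported on pairs of roots of m; w stands for the tensor sum of w b d X_b (x) X_d.\<close>
definition wedge2_m :: "'a::euclidean_space set \<Rightarrow> 'a set \<Rightarrow> ('a \<Rightarrow> 'a \<Rightarrow> complex) set" where
  "wedge2_m Om P = {w. (\<forall>u v. w u v = - w v u) \<and>
       (\<forall>u v. w u v \<noteq> 0 \<longrightarrow> u \<in> roots_m Om P \<and> v \<in> roots_m Om P)}"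

definition wedge :: "'a \<Rightarrow> 'a \<Rightarrow> ('a \<Rightarrow> 'a \<Rightarrow> complex)" where
  "wedge b d = (\<lambda>u v. (if u = b \<and> v = d then 1 else 0) - (if u = d \<and> v = b then 1 else 0))"

text \<open>Evaluation of a root b at h = h1 + i h2 in h.\<close>
definition root_eval :: "'a::euclidean_space \<Rightarrow> 'a \<Rightarrow> 'a \<Rightarrow> complex" where
  "root_eval b h1 h2 = complex_of_real (b \<bullet> h1) + \<i> * complex_of_real (b \<bullet> h2)"

text \<open>Coefficient of X_u in [x, X_b], for x = h + sum over gamma in Om_P of c gamma X_gamma in k,
  and b a root of m.\<close>
definition ad_k :: "'a::euclidean_space set \<Rightarrow> 'a set \<Rightarrow> ('a \<Rightarrow> 'a \<Rightarrow> complex) \<Rightarrow>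
    'a \<Rightarrow> 'a \<Rightarrow> ('a \<Rightarrow> complex) \<Rightarrow> 'a \<Rightarrow> 'a \<Rightarrow> complex" where
  "ad_k Om P N h1 h2 c u b =
     (if u = b then root_eval b h1 h2 else 0) +
     (\<Sum>g\<in>roots_P Om P. c g * N g b * (if u = g + b then 1 else 0))"

definition k_act :: "'a::euclidean_space set \<Rightarrow> 'a set \<Rightarrow> ('a \<Rightarrow> 'a \<Rightarrow> complex) \<Rightarrow>
    'a \<Rightarrow> 'a \<Rightarrow> ('a \<Rightarrow> complex) \<Rightarrow> ('a \<Rightarrow> 'a \<Rightarrow> complex) \<Rightarrow> ('a \<Rightarrow> 'a \<Rightarrow> complex)" where
  "k_act Om P N h1 h2 c w = (\<lambda>u v.
      (\<Sum>b\<in>roots_m Om P. ad_k Om P N h1 h2 c u b * w b v) +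
      (\<Sum>d\<in>roots_m Om P. ad_k Om P N h1 h2 c v d * w u d))"

definition k_invariant :: "'a::euclidean_space set \<Rightarrow> 'a set \<Rightarrow> ('a \<Rightarrow> 'a \<Rightarrow> complex) \<Rightarrow>
    ('a \<Rightarrow> 'a \<Rightarrow> complex) \<Rightarrow> bool" where
  "k_invariant Om P N w \<longleftrightarrow>
     (\<forall>h1 h2 (c::'a \<Rightarrow> complex). k_act Om P N h1 h2 c w = (\<lambda>u v. 0))"

definition upsilon :: "'a::euclidean_space set \<Rightarrow> 'a set \<Rightarrow> ('a set \<Rightarrow> complex) \<Rightarrow>
    ('a \<Rightarrow> 'a \<Rightarrow> complex)" where
  "upsilon Om P c = (\<lambda>u v. \<Sum>A\<in>quasi_roots Om P.
      c A * (\<Sum>b\<in>{b\<in>Om. qclass P b = A}. wedge b (-b) u v))"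

end

theory Submission
  imports Defs "HOL-Library.Multiset"
begin

text \<open>
  An h-invariant element of m \<and> m has weight zero, so it is a combination of the tensors
  X_\<beta> \<otimes> X_(-\<beta>), \<beta> a root of m, with coefficients \<phi>(\<beta>).  Invariance under a root vector
  X_\<gamma>, \<gamma> \<in> \<Omega>_P, amounts to \<phi>(\<beta> - \<gamma>) = \<phi>(\<beta>) whenever \<beta> - \<gamma> is again a root, because
  N(\<gamma>, \<beta> - \<gamma>) = -N(\<gamma>, -\<beta>) \<noteq> 0; conversely a \<phi> that is constant on quasi-roots is invariant.
  Any two roots of m that are congruent modulo \<Gamma>(P) are linked by such steps: write their
  difference as a sum of roots of \<Omega>_P; as long as two summands have negative inner product
  they can be merged, and once all inner products are nonnegative some summand \<gamma> has
  positive inner product with one of the two roots, so a step by \<gamma> keeps us among the roots.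
  Hence \<phi> only depends on the quasi-root, which is the claimed form.
\<close>

lemma int_lattice_zero: "0 \<in> int_lattice P"
  unfolding int_lattice_def by (rule CollectI, rule exI[of _ "\<lambda>_. 0"]) simp

lemma int_lattice_add: "x \<in> int_lattice P \<Longrightarrow> y \<in> int_lattice P \<Longrightarrow> x + y \<in> int_lattice P"
  unfolding int_lattice_def
proof safe
  fix c d :: "'a \<Rightarrow> int"
  show "\<exists>e. (\<Sum>p\<in>P. of_int (c p) *\<^sub>R p) + (\<Sum>p\<in>P. of_int (d p) *\<^sub>R p) = (\<Sum>p\<in>P. of_int (e p) *\<^sub>R p)"
    by (rule exI[of _ "\<lambda>p. c p + d p"]) (simp add: sum.distrib scaleR_add_left)
qed

lemma int_lattice_uminus: "x \<in> int_lattice P \<Longrightarrow> - x \<in> int_lattice P"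
  unfolding int_lattice_def
proof safe
  fix c :: "'a \<Rightarrow> int"
  show "\<exists>e. - (\<Sum>p\<in>P. of_int (c p) *\<^sub>R p) = (\<Sum>p\<in>P. of_int (e p) *\<^sub>R p)"
    by (rule exI[of _ "\<lambda>p. - c p"]) (simp add: sum_negf)
qed

lemma int_lattice_diff: "x \<in> int_lattice P \<Longrightarrow> y \<in> int_lattice P \<Longrightarrow> x - y \<in> int_lattice P"
  using int_lattice_add[of x P "-y"] int_lattice_uminus[of y P] by simp

lemma int_lattice_generator: "finite P \<Longrightarrow> p \<in> P \<Longrightarrow> p \<in> int_lattice P"
  unfolding int_lattice_def
  by (rule CollectI, rule exI[of _ "\<lambda>q. if q = p then 1 else 0"])
     (simp add: if_distrib[of "\<lambda>t. of_int t *\<^sub>R _"] cong: if_cong)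

lemma mem_qclass_iff: "x \<in> qclass P y \<longleftrightarrow> x - y \<in> int_lattice P"
proof
  assume "x \<in> qclass P y"
  then show "x - y \<in> int_lattice P"
    unfolding qclass_def by auto
next
  assume "x - y \<in> int_lattice P"
  moreover have "x = y + (x - y)"
    by simp
  ultimately show "x \<in> qclass P y"
    unfolding qclass_def by blast
qed

lemma qclass_eq_iff: "qclass P x = qclass P y \<longleftrightarrow> x - y \<in> int_lattice P"
proof
  assume "qclass P x = qclass P y"
  moreover have "x \<in> qclass P x"
    using int_lattice_zero by (simp add: mem_qclass_iff)
  ultimately show "x - y \<in> int_lattice P"
    by (simp add: mem_qclass_iff)
next
  assume xy: "x - y \<in> int_lattice P"
  show "qclass P x = qclass P y"
  proof (rule set_eqI)
    fix z
    have "z - y = (z - x) + (x - y)" "z - x = (z - y) - (x - y)"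
      by simp_all
    then show "z \<in> qclass P x \<longleftrightarrow> z \<in> qclass P y"
      unfolding mem_qclass_iff using xy int_lattice_add int_lattice_diff by metis
  qed
qed

lemma uminus_qclass: "uminus ` qclass P b = qclass P (- b)"
proof (rule set_eqI)
  fix z
  have "z \<in> uminus ` qclass P b \<longleftrightarrow> - z \<in> qclass P b"
    by (metis image_iff minus_minus)
  also have "\<dots> \<longleftrightarrow> z \<in> qclass P (- b)"
    unfolding mem_qclass_iff using int_lattice_uminus by (metis minus_diff_eq diff_minus_eq_add add.commute)
  finally show "z \<in> uminus ` qclass P b \<longleftrightarrow> z \<in> qclass P (- b)" .
qed

lemma simple_root_systemD:
  assumes "simple_root_system Om"
  shows "finite Om" and "0 \<notin> Om"
    and "\<And>a b. a \<in> Om \<Longrightarrow> b \<in> Om \<Longrightarrow> b - (2 * (b \<bullet> a) / (a \<bullet> a)) *\<^sub>R a \<in> Om"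
    and "\<And>a b. a \<in> Om \<Longrightarrow> b \<in> Om \<Longrightarrow> 2 * (b \<bullet> a) / (a \<bullet> a) \<in> \<int>"
  using assms unfolding simple_root_system_def by (elim conjE; simp)+

lemma root_uminus:
  assumes "simple_root_system Om" "a \<in> Om"
  shows "- a \<in> Om"
proof -
  have "a \<noteq> 0"
    using simple_root_systemD(2)[OF assms(1)] assms(2) by blast
  then have "a - (2 * (a \<bullet> a) / (a \<bullet> a)) *\<^sub>R a = - a"
    by (simp add: scaleR_2)
  then show ?thesis
    using simple_root_systemD(3)[OF assms(1,2,2)] by simp
qed

lemma cartan_product_cases:
  fixes i j :: int
  assumes "0 < i" "0 < j" "i * j \<le> 4"
  shows "i = 1 \<or> j = 1 \<or> (i = 2 \<and> j = 2)"
proof (rule ccontr)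
  assume "\<not> ?thesis"
  then have "2 \<le> i" "2 \<le> j" "3 \<le> i \<or> 3 \<le> j"
    using assms(1,2) by auto
  then have "6 \<le> i * j"
    using mult_mono[of 3 i 2 j] mult_mono[of 2 i 3 j] by auto
  with assms(3) show False
    by simp
qed

lemma root_diff_if_inner_pos:
  assumes rs: "simple_root_system Om" and a: "a \<in> Om" and b: "b \<in> Om"
    and pos: "a \<bullet> b > 0" and ne: "a \<noteq> b"
  shows "a - b \<in> Om"
proof -
  note refl = simple_root_systemD(3)[OF rs] and int = simple_root_systemD(4)[OF rs]
  have aa: "a \<bullet> a > 0" and bb: "b \<bullet> b > 0"
    using a b simple_root_systemD(2)[OF rs] by (metis inner_gt_zero_iff)+
  obtain i where i: "2 * (a \<bullet> b) / (b \<bullet> b) = of_int i"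
    using int[OF b a] by (auto elim: Ints_cases)
  obtain j where j: "2 * (a \<bullet> b) / (a \<bullet> a) = of_int j"
    using int[OF a b] by (auto elim: Ints_cases simp: inner_commute)
  have "i > 0" "j > 0"
    using i j pos aa bb by (metis divide_pos_pos mult_pos_pos of_int_0_less_iff zero_less_numeral)+
  moreover have "of_int (i * j) = 4 * (a \<bullet> b)^2 / ((a \<bullet> a) * (b \<bullet> b))"
    unfolding of_int_mult i[symmetric] j[symmetric] by (simp add: power2_eq_square)
  then have "of_int (i * j) \<le> (4::real)"
    using Cauchy_Schwarz_ineq[of a b] aa bb by (simp add: divide_le_eq)
  then have "i * j \<le> 4"
    by linarith
  ultimately consider "i = 1" | "j = 1" | "i = 2" "j = 2"
    using cartan_product_cases[of i j] by force
  then show ?thesis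
  proof cases
    case 1
    then show ?thesis
      using refl[OF b a] i by simp
  next
    case 2
    then have "b - a \<in> Om"
      using refl[OF a b] j by (simp add: inner_commute)
    then show ?thesis
      using root_uminus[OF rs] by fastforce
  next
    case 3
    then have "a \<bullet> b = b \<bullet> b" "a \<bullet> b = a \<bullet> a"
      using i j aa bb by (simp_all add: divide_eq_eq)
    then have "(a - b) \<bullet> (a - b) = 0"
      by (simp add: inner_diff inner_commute)
    with ne show ?thesis
      by simp
  qed
qed

lemma root_add_if_inner_neg:
  assumes rs: "simple_root_system Om" and "a \<in> Om" "b \<in> Om" "a \<bullet> b < 0" "a + b \<noteq> 0"
  shows "a + b \<in> Om"
  using root_diff_if_inner_pos[OF rs \<open>a \<in> Om\<close> root_uminus[OF rs \<open>b \<in> Om\<close>]] assms(4,5)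
  by (simp add: eq_neg_iff_add_eq_0)

lemma roots_P_iff: "u \<in> roots_P Om P \<longleftrightarrow> u \<in> Om \<and> u \<in> int_lattice P"
  unfolding roots_P_def by blast

lemma roots_m_iff: "u \<in> roots_m Om P \<longleftrightarrow> u \<in> Om \<and> u \<notin> int_lattice P"
  unfolding roots_m_def roots_P_def by blast

lemma roots_m_uminus: "simple_root_system Om \<Longrightarrow> u \<in> roots_m Om P \<Longrightarrow> - u \<in> roots_m Om P"
  unfolding roots_m_iff using root_uminus int_lattice_uminus by (metis minus_minus)

lemma finite_roots_P: "simple_root_system Om \<Longrightarrow> finite (roots_P Om P)"
  using simple_root_systemD(1) unfolding roots_P_def by blast

lemma finite_roots_m: "simple_root_system Om \<Longrightarrow> finite (roots_m Om P)"
  using simple_root_systemD(1) unfolding roots_m_def by blast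

lemma int_lattice_eq_sum_mset:
  assumes rs: "simple_root_system Om" and PO: "P \<subseteq> Om" and x: "x \<in> int_lattice P"
  obtains M where "set_mset M \<subseteq> roots_P Om P" "sum_mset M = x"
proof -
  have finP: "finite P"
    using simple_root_systemD(1)[OF rs] PO finite_subset by blast
  obtain k where x_eq: "x = (\<Sum>p\<in>P. of_int (k p) *\<^sub>R p)"
    using x unfolding int_lattice_def by blast
  have sum_replicate: "sum_mset (replicate_mset n q) = of_nat n *\<^sub>R q" for n and q :: 'a
    by (induction n) (simp_all add: algebra_simps)
  have multiple: "\<exists>M. set_mset M \<subseteq> roots_P Om P \<and> sum_mset M = of_int (k p) *\<^sub>R p" if "p \<in> P" for p
  proof -
    have "p \<in> roots_P Om P" "- p \<in> roots_P Om P"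
      using that PO int_lattice_generator[OF finP] int_lattice_uminus root_uminus[OF rs]
      unfolding roots_P_def by blast+
    show ?thesis
    proof (cases "k p \<ge> 0")
      case True
      then show ?thesis
        using \<open>p \<in> roots_P Om P\<close> by (intro exI[of _ "replicate_mset (nat (k p)) p"]) (simp add: sum_replicate)
    next
      case False
      then show ?thesis
        using \<open>- p \<in> roots_P Om P\<close>
        by (intro exI[of _ "replicate_mset (nat (- k p)) (- p)"]) (simp add: sum_replicate)
    qed
  qed
  have "\<exists>M. set_mset M \<subseteq> roots_P Om P \<and> sum_mset M = (\<Sum>p\<in>S. of_int (k p) *\<^sub>R p)"
    if "finite S" "S \<subseteq> P" for S
    using that
  proof (induction S rule: finite_induct)
    case (insert p S)
    then obtain M M' where "set_mset M \<subseteq> roots_P Om P" "sum_mset M = (\<Sum>p\<in>S. of_int (k p) *\<^sub>R p)"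
      and "set_mset M' \<subseteq> roots_P Om P" "sum_mset M' = of_int (k p) *\<^sub>R p"
      using multiple by (metis insert_subset)
    with insert.hyps show ?case
      by (intro exI[of _ "M' + M"]) simp
  qed (intro exI[of _ "{#}"], simp)
  then show ?thesis
    using that finP x_eq by blast
qed

lemma merge_sum_mset_of_inner_neg:
  assumes rs: "simple_root_system Om"
    and M: "set_mset (add_mset x (add_mset y M)) \<subseteq> roots_P Om P" and xy: "x \<bullet> y < 0"
  obtains M' where "size M' \<le> size M + 1" "set_mset M' \<subseteq> roots_P Om P"
    "sum_mset M' = x + y + sum_mset M"
proof (cases "x + y = 0")
  case True
  then show ?thesis
    using that[of M] M by simp
next
  case False
  then have "x + y \<in> roots_P Om P"
    using M xy by (auto simp: roots_P_iff intro: root_add_if_inner_neg[OF rs] int_lattice_add)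
  then show ?thesis
    using that[of "add_mset (x + y) M"] M by (simp add: add.assoc)
qed

lemma inner_sum_mset_pos:
  fixes x :: "'a::real_inner"
  assumes "x \<noteq> 0" "\<forall>y\<in>#M. 0 \<le> y \<bullet> x"
  shows "0 < sum_mset (add_mset x M) \<bullet> x"
proof -
  have "0 \<le> sum_mset M \<bullet> x"
    using assms(2) by (induction M) (auto simp: inner_add_left)
  then show ?thesis
    using assms(1) by (simp add: inner_add_left add_pos_nonneg)
qed

lemma mset_inner_cases:
  fixes M :: "'a::real_inner multiset"
  obtains x y M' where "M = add_mset x (add_mset y M')" "x \<bullet> y < 0"
    | "M = {#}"
    | x M' where "M = add_mset x M'" "\<forall>y\<in>#M'. 0 \<le> y \<bullet> x"
proof (cases "\<exists>x y M'. M = add_mset x (add_mset y M') \<and> x \<bullet> y < 0")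
  case True
  then show ?thesis
    using that(1) by blast
next
  case no_neg: False
  show ?thesis
  proof (cases M)
    case (add x M')
    have "0 \<le> y \<bullet> x" if "y \<in># M'" for y
    proof -
      have "M = add_mset x (add_mset y (M' - {#y#}))"
        using add that by simp
      then have "\<not> x \<bullet> y < 0"
        using no_neg by blast
      then show ?thesis
        by (simp add: inner_commute)
    qed
    then show ?thesis
      using that(3) add by blast
  qed (use that(2) in blast)
qed

lemma roots_m_step_if_inner_pos:
  assumes rs: "simple_root_system Om" and x: "x \<in> roots_P Om P"
    and a: "a \<in> roots_m Om P" and b: "b \<in> roots_m Om P" and pos: "0 < (a - b) \<bullet> x"
  obtains "a - x \<in> roots_m Om P" | "b + x \<in> roots_m Om P"
proof -
  have x': "x \<in> Om" "x \<in> int_lattice P"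
    using x by (simp_all add: roots_P_iff)
  have a': "a \<in> Om" "a \<notin> int_lattice P" and b': "b \<in> Om" "b \<notin> int_lattice P"
    using a b by (simp_all add: roots_m_iff)
  have "a \<bullet> x > 0 \<or> b \<bullet> x < 0"
    using pos unfolding inner_diff_left by linarith
  then show ?thesis
  proof
    assume ax: "a \<bullet> x > 0"
    have "a \<noteq> x"
      using a' x' by auto
    then have "a - x \<in> Om"
      using root_diff_if_inner_pos[OF rs a'(1) x'(1) ax] by simp
    moreover have "a - x \<notin> int_lattice P"
      using a'(2) x'(2) int_lattice_add[of "a - x" P x] by auto
    ultimately show ?thesis
      using that(1) by (simp add: roots_m_iff)
  next
    assume bx: "b \<bullet> x < 0"
    have "b + x \<noteq> 0"
      using b'(2) int_lattice_uminus[OF x'(2)] eq_neg_iff_add_eq_0 by metis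
    then have "b + x \<in> Om"
      using root_add_if_inner_neg[OF rs b'(1) x'(1) bx] by simp
    moreover have "b + x \<notin> int_lattice P"
      using b'(2) x'(2) int_lattice_diff[of "b + x" P x] by auto
    ultimately show ?thesis
      using that(2) by (simp add: roots_m_iff)
  qed
qed

lemma eq_if_diff_sum_mset:
  assumes rs: "simple_root_system Om"
    and step: "\<And>u g. u \<in> roots_m Om P \<Longrightarrow> g \<in> roots_P Om P \<Longrightarrow> u - g \<in> Om \<Longrightarrow> phi (u - g) = phi u"
    and "set_mset M \<subseteq> roots_P Om P" "a \<in> roots_m Om P" "b \<in> roots_m Om P" "a - b = sum_mset M"
  shows "phi a = phi b"
  using assms(3-)
proof (induction "size M" arbitrary: M a b rule: less_induct)
  case less
  show ?case
  proof (cases M rule: mset_inner_cases)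
    case (1 x y M')
    then obtain M'' where "size M'' \<le> size M' + 1" "set_mset M'' \<subseteq> roots_P Om P"
      "sum_mset M'' = x + y + sum_mset M'"
      using merge_sum_mset_of_inner_neg[OF rs] less.prems(1) by blast
    moreover have "size M = size M' + 2" "sum_mset M = x + y + sum_mset M'"
      using 1 by (simp_all add: add.assoc)
    ultimately show ?thesis
      using less.hyps[of M'' a b] less.prems(2-4) by simp
  next
    case 2
    then show ?thesis
      using less.prems(4) by simp
  next
    case (3 x M')
    have x: "x \<in> roots_P Om P" and M': "set_mset M' \<subseteq> roots_P Om P"
      using less.prems(1) 3 by auto
    have "x \<noteq> 0"
      using x simple_root_systemD(2)[OF rs] by (auto simp: roots_P_iff)
    then have "0 < (a - b) \<bullet> x"
      using inner_sum_mset_pos[of x M'] less.prems(4) 3 by simp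
    then show ?thesis
    proof (rule roots_m_step_if_inner_pos[OF rs x less.prems(2,3)])
      assume ax: "a - x \<in> roots_m Om P"
      then have "phi (a - x) = phi a"
        using step[OF less.prems(2) x] by (simp add: roots_m_iff)
      then show ?thesis
        using less.hyps[of M' "a - x" b] 3 M' ax less.prems(3,4) by (simp add: algebra_simps)
    next
      assume bx: "b + x \<in> roots_m Om P"
      then have "phi b = phi (b + x)"
        using step[OF bx x] less.prems(3) by (simp add: roots_m_iff)
      then show ?thesis
        using less.hyps[of M' a "b + x"] 3 M' bx less.prems(2,4) by (simp add: algebra_simps)
    qed
  qed
qed

lemma eq_if_diff_in_int_lattice:
  assumes rs: "simple_root_system Om" and "P \<subseteq> Om"
    and step: "\<And>u g. u \<in> roots_m Om P \<Longrightarrow> g \<in> roots_P Om P \<Longrightarrow> u - g \<in> Om \<Longrightarrow> phi (u - g) = phi u"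
    and "a \<in> roots_m Om P" "b \<in> roots_m Om P" "a - b \<in> int_lattice P"
  shows "phi a = phi b"
proof -
  obtain M where "set_mset M \<subseteq> roots_P Om P" "sum_mset M = a - b"
    using int_lattice_eq_sum_mset[OF rs assms(2,6)] .
  then show ?thesis
    using eq_if_diff_sum_mset[OF rs step _ assms(4,5)] by simp
qed

lemma chevalley_N_nonzero_iff:
  "chevalley_constants Om N \<Longrightarrow> a \<in> Om \<Longrightarrow> b \<in> Om \<Longrightarrow> N a b \<noteq> 0 \<longleftrightarrow> a + b \<in> Om"
  unfolding chevalley_constants_def by (elim conjE) blast

lemma chevalley_N_swap:
  assumes N: "chevalley_constants Om N" and "g \<in> Om" "x \<in> Om" "y \<in> Om" "g + x + y = 0"
  shows "N g x = - N g y"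
proof -
  have "N g x = N y g" "N y g = - N g y"
    using N assms(2-) unfolding chevalley_constants_def by (elim conjE; metis)+
  then show ?thesis
    by simp
qed

lemma chevalley_N_eq_zero_if_not_roots_m:
  assumes N: "chevalley_constants Om N" and y: "y \<in> roots_m Om P" and g: "g \<in> roots_P Om P"
    and gy: "g + y \<notin> roots_m Om P"
  shows "N g y = 0"
proof -
  have "g + y \<notin> int_lattice P"
    using y g int_lattice_diff[of "g + y" P g] by (auto simp: roots_m_iff roots_P_iff)
  then have "g + y \<notin> Om"
    using gy by (simp add: roots_m_iff)
  then show ?thesis
    using chevalley_N_nonzero_iff[OF N] y g by (auto simp: roots_m_iff roots_P_iff)
qed

lemma root_eval_uminus: "root_eval (- b) h1 h2 = - root_eval b h1 h2"
  unfolding root_eval_def by (simp add: algebra_simps)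

lemma ad_k_eq:
  assumes "finite (roots_P Om P)"
  shows "ad_k Om P N h1 h2 c u b = (if u = b then root_eval b h1 h2 else 0) +
     (if u - b \<in> roots_P Om P then c (u - b) * N (u - b) b else 0)"
proof -
  have "(\<Sum>g\<in>roots_P Om P. c g * N g b * (if u = g + b then 1 else 0)) =
        (\<Sum>g\<in>roots_P Om P. if g = u - b then c g * N g b else 0)"
    by (rule sum.cong) (auto simp: algebra_simps)
  also have "\<dots> = (if u - b \<in> roots_P Om P then c (u - b) * N (u - b) b else 0)"
    using assms by (simp add: sum.delta')
  finally show ?thesis
    unfolding ad_k_def by simp
qed

definition opposite_tensor :: "'a::euclidean_space set \<Rightarrow> 'a set \<Rightarrow> ('a \<Rightarrow> complex) \<Rightarrow> 'a \<Rightarrow> 'a \<Rightarrow> complex"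
  where "opposite_tensor Om P f = (\<lambda>u v. if u \<in> roots_m Om P \<and> v = - u then f u else 0)"

lemma opposite_tensor_in_wedge2_m:
  assumes rs: "simple_root_system Om" and odd: "\<And>u. u \<in> roots_m Om P \<Longrightarrow> f (- u) = - f u"
  shows "opposite_tensor Om P f \<in> wedge2_m Om P"
  unfolding wedge2_m_def opposite_tensor_def using odd roots_m_uminus[OF rs] by auto

lemma upsilon_eq_opposite_tensor:
  assumes rs: "simple_root_system Om"
  shows "upsilon Om P c = opposite_tensor Om P (\<lambda>u. c (qclass P u) - c (qclass P (- u)))"
proof (intro ext)
  fix u v
  let ?m = "roots_m Om P" and ?Q = "quasi_roots Om P"
  have finm: "finite ?m" and finQ: "finite ?Q"
    using finite_roots_m[OF rs] unfolding quasi_roots_def by simp_all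
  have fibre: "{b \<in> Om. qclass P b = A} = {b \<in> ?m. qclass P b = A}" if A: "A \<in> ?Q" for A
  proof -
    obtain b0 where "b0 \<in> ?m" "A = qclass P b0"
      using A unfolding quasi_roots_def by blast
    then show ?thesis
      using int_lattice_diff[of _ P "_ - b0"] by (force simp: roots_m_iff qclass_eq_iff)
  qed
  have "upsilon Om P c u v = (\<Sum>A\<in>?Q. \<Sum>b\<in>{b \<in> ?m. qclass P b = A}. c (qclass P b) * wedge b (- b) u v)"
    unfolding upsilon_def by (intro sum.cong refl) (simp add: fibre sum_distrib_left)
  also have "\<dots> = (\<Sum>b\<in>?m. c (qclass P b) * wedge b (- b) u v)"
    by (rule sum.group[OF finm finQ]) (auto simp: quasi_roots_def)
  also have "\<dots> = (\<Sum>b\<in>?m. (if b = u then (if v = - u then c (qclass P u) else 0) else 0) -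
                              (if b = v then (if u = - v then c (qclass P v) else 0) else 0))"
    by (rule sum.cong) (auto simp: wedge_def)
  also have "\<dots> = (if u \<in> ?m then (if v = - u then c (qclass P u) else 0) else 0) -
                  (if v \<in> ?m then (if u = - v then c (qclass P v) else 0) else 0)"
    using finm by (simp add: sum_subtractf sum.delta)
  also have "\<dots> = opposite_tensor Om P (\<lambda>u. c (qclass P u) - c (qclass P (- u))) u v"
    using roots_m_uminus[OF rs, of u P] roots_m_uminus[OF rs, of v P] by (auto simp: opposite_tensor_def)
  finally show "upsilon Om P c u v = opposite_tensor Om P (\<lambda>u. c (qclass P u) - c (qclass P (- u))) u v" .
qed

lemma k_act_opposite_tensor:
  assumes rs: "simple_root_system Om"
  shows "k_act Om P N h1 h2 c (opposite_tensor Om P f) u v =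
     (if - v \<in> roots_m Om P then ad_k Om P N h1 h2 c u (- v) * f (- v) else 0) +
     (if u \<in> roots_m Om P then ad_k Om P N h1 h2 c v (- u) * f u else 0)"
proof -
  let ?ad = "ad_k Om P N h1 h2 c" and ?m = "roots_m Om P"
  have "(\<Sum>b\<in>?m. ?ad u b * opposite_tensor Om P f b v) = (\<Sum>b\<in>?m. if b = - v then ?ad u (- v) * f (- v) else 0)"
    by (rule sum.cong) (auto simp: opposite_tensor_def)
  moreover have "(\<Sum>d\<in>?m. ?ad v d * opposite_tensor Om P f u d) =
      (\<Sum>d\<in>?m. if d = - u then (if u \<in> ?m then ?ad v (- u) * f u else 0) else 0)"
    by (rule sum.cong) (auto simp: opposite_tensor_def)
  ultimately show ?thesis
    unfolding k_act_def using finite_roots_m[OF rs] roots_m_uminus[OF rs, of u P] by (simp add: sum.delta)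
qed

lemma opposite_tensor_terms_cancel:
  assumes rs: "simple_root_system Om" and N: "chevalley_constants Om N"
    and const: "\<And>a b. a \<in> roots_m Om P \<Longrightarrow> b \<in> roots_m Om P \<Longrightarrow> a - b \<in> int_lattice P \<Longrightarrow> f a = f b"
    and g: "g \<in> roots_P Om P" and uv: "g = u + v"
  shows "(if - v \<in> roots_m Om P then N g (- v) * f (- v) else 0) +
         (if u \<in> roots_m Om P then N g (- u) * f u else 0) = 0"
proof -
  let ?m = "roots_m Om P"
  consider "- v \<in> ?m" "u \<in> ?m" | "- v \<notin> ?m" | "u \<notin> ?m"
    by blast
  then show ?thesis
  proof cases
    case 1
    have "- v - u = - g"
      by (simp add: uv)
    then have "f (- v) = f u"
      using const[OF 1] int_lattice_uminus[of g P] g by (simp add: roots_P_iff)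
    moreover have "- u \<in> Om"
      using roots_m_uminus[OF rs 1(2)] by (simp add: roots_m_iff)
    then have "N g (- v) = - N g (- u)"
      using chevalley_N_swap[OF N, of g "- v" "- u"] g 1(1) by (simp add: roots_P_iff roots_m_iff uv)
    ultimately show ?thesis
      by (simp add: 1)
  next
    case 2
    then have "v \<notin> ?m"
      using roots_m_uminus[OF rs, of v P] by blast
    then have "u \<in> ?m \<Longrightarrow> N g (- u) = 0"
      using chevalley_N_eq_zero_if_not_roots_m[OF N roots_m_uminus[OF rs] g] by (simp add: uv)
    then show ?thesis
      by (simp add: 2)
  next
    case 3
    then have "- v \<in> ?m \<Longrightarrow> N g (- v) = 0"
      using chevalley_N_eq_zero_if_not_roots_m[OF N _ g, of "- v"] by (simp add: uv)
    then show ?thesis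
      by (simp add: 3)
  qed
qed

lemma k_invariant_opposite_tensor:
  assumes rs: "simple_root_system Om" and N: "chevalley_constants Om N"
    and const: "\<And>a b. a \<in> roots_m Om P \<Longrightarrow> b \<in> roots_m Om P \<Longrightarrow> a - b \<in> int_lattice P \<Longrightarrow> f a = f b"
  shows "k_invariant Om P N (opposite_tensor Om P f)"
  unfolding k_invariant_def
proof (intro allI ext)
  fix h1 h2 c u v
  let ?m = "roots_m Om P" and ?Psi = "roots_P Om P"
  note k_act = k_act_opposite_tensor[OF rs] and ad_k = ad_k_eq[OF finite_roots_P[OF rs]]
  show "k_act Om P N h1 h2 c (opposite_tensor Om P f) u v = 0"
  proof (cases "v = - u")
    case True
    have "0 \<notin> ?Psi"
      using simple_root_systemD(2)[OF rs] by (simp add: roots_P_iff)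
    then show ?thesis
      by (simp add: k_act ad_k True root_eval_uminus)
  next
    case False
    then have "u \<noteq> - v"
      by auto
    define g where "g = u + v"
    have "k_act Om P N h1 h2 c (opposite_tensor Om P f) u v =
        (if g \<in> ?Psi then c g * ((if - v \<in> ?m then N g (- v) * f (- v) else 0) +
                                 (if u \<in> ?m then N g (- u) * f u else 0)) else 0)"
      using False \<open>u \<noteq> - v\<close> by (simp add: k_act ad_k g_def add.commute algebra_simps)
    then show ?thesis
      using opposite_tensor_terms_cancel[where P = P and f = f, OF rs N const _ g_def] by simp
  qed
qed

lemma k_invariant_eq_opposite_tensor:
  assumes rs: "simple_root_system Om" and w: "w \<in> wedge2_m Om P" and inv: "k_invariant Om P N w"
  shows "w = opposite_tensor Om P (\<lambda>x. w x (- x))"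
proof -
  let ?m = "roots_m Om P"
  have supp: "u \<in> ?m" "v \<in> ?m" if "w u v \<noteq> 0" for u v
    using w that unfolding wedge2_m_def by blast+
  have opposite: "v = - u" if nz: "w u v \<noteq> 0" for u v
  proof -
    let ?h = "u + v"
    have ad: "ad_k Om P N ?h 0 (\<lambda>_. 0) x b = (if x = b then root_eval b ?h 0 else 0)" for x b
      by (simp add: ad_k_eq[OF finite_roots_P[OF rs]])
    \<comment> \<open>Acting by h = u + v multiplies the coefficient of X_u \<otimes> X_v by \<langle>u + v, u + v\<rangle>.\<close>
    have "0 = k_act Om P N ?h 0 (\<lambda>_. 0) w u v"
      using inv unfolding k_invariant_def by metis
    also have "\<dots> = (\<Sum>b\<in>?m. if b = u then root_eval u ?h 0 * w u v else 0) +
                    (\<Sum>d\<in>?m. if d = v then root_eval v ?h 0 * w u v else 0)"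
      unfolding k_act_def ad by (intro arg_cong2[where f = "(+)"] sum.cong) auto
    also have "\<dots> = (root_eval u ?h 0 + root_eval v ?h 0) * w u v"
      using finite_roots_m[OF rs] supp[OF nz] by (simp add: sum.delta' algebra_simps)
    also have "\<dots> = complex_of_real (?h \<bullet> ?h) * w u v"
      unfolding root_eval_def by (simp add: inner_add_left)
    finally have "?h = 0"
      using nz by simp
    then show ?thesis
      by (simp add: eq_neg_iff_add_eq_0 add.commute)
  qed
  show ?thesis
  proof (intro ext)
    fix u v
    show "w u v = opposite_tensor Om P (\<lambda>x. w x (- x)) u v"
      using supp[of u v] opposite[of u v] unfolding opposite_tensor_def by auto
  qed
qed

lemma k_invariant_opposite_tensor_step:
  assumes rs: "simple_root_system Om" and N: "chevalley_constants Om N"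
    and inv: "k_invariant Om P N (opposite_tensor Om P f)"
    and u: "u \<in> roots_m Om P" and g: "g \<in> roots_P Om P" and ug: "u - g \<in> Om"
  shows "f (u - g) = f u"
proof -
  let ?c = "\<lambda>x. if x = g then (1::complex) else 0"
  have "g \<noteq> 0"
    using g simple_root_systemD(2)[OF rs] by (auto simp: roots_P_iff)
  have "u - g \<in> roots_m Om P"
    using u g ug int_lattice_add[of "u - g" P g] by (auto simp: roots_m_iff roots_P_iff)
  have "0 = k_act Om P N 0 0 ?c (opposite_tensor Om P f) u (g - u)"
    using inv unfolding k_invariant_def by metis
  also have "\<dots> = N g (u - g) * f (u - g) + N g (- u) * f u"
    using \<open>u - g \<in> roots_m Om P\<close> u g \<open>g \<noteq> 0\<close>
    by (simp add: k_act_opposite_tensor[OF rs] ad_k_eq[OF finite_roots_P[OF rs]] root_eval_def)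
  moreover have "- u \<in> Om"
    using root_uminus[OF rs] u by (simp add: roots_m_iff)
  then have "N g (u - g) = - N g (- u)"
    using chevalley_N_swap[OF N, of g "u - g" "- u"] g ug by (simp add: roots_P_iff)
  moreover have "N g (- u) \<noteq> 0"
    using chevalley_N_nonzero_iff[OF N, of g "- u"] root_uminus[OF rs ug] g \<open>- u \<in> Om\<close>
    by (simp add: roots_P_iff)
  ultimately show ?thesis
    by (simp add: algebra_simps)
qed

lemma opposite_tensor_eq_upsilon:
  assumes rs: "simple_root_system Om"
    and odd: "\<And>u. u \<in> roots_m Om P \<Longrightarrow> f (- u) = - f u"
    and const: "\<And>a b. a \<in> roots_m Om P \<Longrightarrow> b \<in> roots_m Om P \<Longrightarrow> a - b \<in> int_lattice P \<Longrightarrow> f a = f b"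
  obtains c where "opposite_tensor Om P f = upsilon Om P c"
    and "\<forall>A\<in>quasi_roots Om P. c (uminus ` A) = - c A"
proof -
  \<comment> \<open>Each X_\<beta> \<and> X_(-\<beta>) enters upsilon through both \<beta> and -\<beta>, hence the factor 1/2.\<close>
  define c where "c A = f (SOME b. b \<in> Om \<and> qclass P b = A) / 2" for A
  have c_qclass: "c (qclass P x) = f x / 2" if x: "x \<in> roots_m Om P" for x
  proof -
    define r where "r = (SOME b. b \<in> Om \<and> qclass P b = qclass P x)"
    have "\<exists>b. b \<in> Om \<and> qclass P b = qclass P x"
      using x by (auto simp: roots_m_iff)
    then have "r \<in> Om" "qclass P r = qclass P x"
      unfolding r_def by (metis (mono_tags, lifting) someI_ex)+
    then have "r - x \<in> int_lattice P" "r \<in> roots_m Om P"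
      using x int_lattice_diff[of r P "r - x"] by (auto simp: qclass_eq_iff roots_m_iff)
    then show ?thesis
      using const[OF _ x] unfolding c_def r_def[symmetric] by simp
  qed
  have "c (qclass P u) - c (qclass P (- u)) = f u" if "u \<in> roots_m Om P" for u
    unfolding c_qclass[OF that] c_qclass[OF roots_m_uminus[OF rs that]] odd[OF that] by (simp add: field_simps)
  then have "opposite_tensor Om P f = upsilon Om P c"
    unfolding upsilon_eq_opposite_tensor[OF rs] opposite_tensor_def by (auto intro!: ext)
  moreover have "c (uminus ` A) = - c A" if A: "A \<in> quasi_roots Om P" for A
  proof -
    obtain x where "x \<in> roots_m Om P" "A = qclass P x"
      using A unfolding quasi_roots_def by blast
    then show ?thesis
      by (simp add: uminus_qclass c_qclass roots_m_uminus[OF rs] odd)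
  qed
  ultimately show ?thesis
    using that by blast
qed

lemma upsilon_in_wedge2_m:
  assumes rs: "simple_root_system Om"
  shows "upsilon Om P c \<in> wedge2_m Om P"
  unfolding upsilon_eq_opposite_tensor[OF rs] by (rule opposite_tensor_in_wedge2_m[OF rs]) simp

lemma upsilon_k_invariant:
  assumes rs: "simple_root_system Om" and N: "chevalley_constants Om N"
  shows "k_invariant Om P N (upsilon Om P c)"
  unfolding upsilon_eq_opposite_tensor[OF rs]
proof (rule k_invariant_opposite_tensor[OF rs N])
  fix a b
  assume "a - b \<in> int_lattice P"
  moreover have "- a - - b \<in> int_lattice P"
    using int_lattice_uminus[OF calculation] by (simp only: minus_diff_minus)
  ultimately have "qclass P a = qclass P b" "qclass P (- a) = qclass P (- b)"
    by (simp_all only: qclass_eq_iff)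
  then show "c (qclass P a) - c (qclass P (- a)) = c (qclass P b) - c (qclass P (- b))"
    by simp
qed

lemma k_invariant_eq_upsilon:
  assumes rs: "simple_root_system Om" and "P \<subseteq> Om" and N: "chevalley_constants Om N"
    and w: "w \<in> wedge2_m Om P" and inv: "k_invariant Om P N w"
  obtains c where "w = upsilon Om P c" and "\<forall>A\<in>quasi_roots Om P. c (uminus ` A) = - c A"
proof -
  define f where "f x = w x (- x)" for x
  have w_eq: "w = opposite_tensor Om P f"
    unfolding f_def by (rule k_invariant_eq_opposite_tensor[OF rs w inv])
  have "f (- u) = - f u" for u
    using w unfolding f_def wedge2_m_def by (metis (mono_tags, lifting) mem_Collect_eq minus_minus)
  moreover have "f a = f b" if "a \<in> roots_m Om P" "b \<in> roots_m Om P" "a - b \<in> int_lattice P" for a b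
    using inv unfolding w_eq
    by (intro eq_if_diff_in_int_lattice[OF rs assms(2) _ that] k_invariant_opposite_tensor_step[OF rs N])
  ultimately show ?thesis
    using opposite_tensor_eq_upsilon[OF rs, where f = f] that unfolding w_eq by metis
qed

theorem mainTheorem17:
  fixes Om :: "'a::euclidean_space set" and P :: "'a set" and N :: "'a \<Rightarrow> 'a \<Rightarrow> complex"
  assumes "simple_root_system Om"
    and "P \<subseteq> Om"
    and "chevalley_constants Om N"
  shows "(\<forall>c. upsilon Om P c \<in> wedge2_m Om P \<and> k_invariant Om P N (upsilon Om P c)) \<and>
         (\<forall>w\<in>wedge2_m Om P. k_invariant Om P N w \<longrightarrow>
            (\<exists>c. w = upsilon Om P c \<and>
                 (\<forall>A\<in>quasi_roots Om P. c (uminus ` A) = - c A)))"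
  using upsilon_in_wedge2_m[OF assms(1)] upsilon_k_invariant[OF assms(1,3)]
    k_invariant_eq_upsilon[OF assms] by metis

end
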